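(* For every prime $p$, the algebra $\mathbf{A}_p=(\mathbb{Z}_{p^2},+,0,-,(f_n)_{n\in\mathbb{N}})$ with $f_n(x_1,\ldots,x_n)=p\cdot x_1\cdots x_n$ satisfies: the congruence $[\mathbf{1},\mathbf{1}]$ is the congruence whose classes are the cosets of the subgroup $p\mathbb{Z}_{p^2}$, and $[\mathbf{1},[\mathbf{1},\mathbf{1}]]=\mathbf{0}$ (so $\mathbf{A}_p$ is nilpotent); moreover, for every $n\ge1$ the operation $f_n$ is a $0$-absorbing polynomial that is not constantly $0$, and $\mathbf{A}_p$ is not supernilpotent, i.e. $[\mathbf{1},\ldots,\mathbf{1}]\neq\mathbf{0}$ for every number of entries.
   Context: $\mathbf{1}$ denotes the total relation and $\mathbf{0}$ the identity relation on $\mathbb{Z}_{p^2}$. For congruences $\alpha_1,\ldots,\alpha_n$, the (higher) commutator $[\alpha_1,\ldots,\alpha_n]$ is the smallest congruence $\delta$ such that for all polynomials $f(\bar x_1,\ldots,\bar x_n)$ and tuples $\bar a_i\equiv_{\alpha_i}\bar b_i$: if $f(\bar a_1,\bar x_2,\ldots,\bar x_n)\equiv_\delta f(\bar b_1,\bar x_2,\ldots,\bar x_n)$ for all $(\bar x_2,\ldots,\bar x_n)\in\prod_{i=2}^n\{\bar a_i,\bar b_i\}\setminus\{(\bar b_2,\ldots,\bar b_n)\}$, then $f(\bar a_1,\bar b_2,\ldots,\bar b_n)\equiv_\delta f(\bar b_1,\bar b_2,\ldots,\bar b_n)$. A polynomial $g(x_1,\ldots,x_k)$ is $0$-absorbing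 if $g(y_1,\ldots,y_k)=0$ whenever some $y_i=0$. An algebra is supernilpotent if $[\mathbf{1},\ldots,\mathbf{1}]$ ($n+1$ entries) equals $\mathbf{0}$ for some $n$. *)

theory Defs
  imports Main "HOL-Computational_Algebra.Primes"
begin

text \<open>Elements of Z_{p^2} are represented by the integers 0, ..., p^2 - 1.\<close>

definition Ap_carrier :: "int \<Rightarrow> int set" where
  "Ap_carrier p = {0..<p^2}"

definition Ap_add :: "int \<Rightarrow> int \<Rightarrow> int \<Rightarrow> int" where
  "Ap_add p x y = (x + y) mod p^2"

definition Ap_zero :: "int" where
  "Ap_zero = 0"

definition Ap_neg :: "int \<Rightarrow> int \<Rightarrow> int" where
  "Ap_neg p x = (- x) mod p^2"

definition Ap_f :: "int \<Rightarrow> int list \<Rightarrow> int" where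
  "Ap_f p xs = (p * prod_list xs) mod p^2"

inductive_set Pol :: "int \<Rightarrow> 'v set \<Rightarrow> (('v \<Rightarrow> int) \<Rightarrow> int) set"
  for p :: int and V :: "'v set" where
  proj: "v \<in> V \<Longrightarrow> (\<lambda>x. x v) \<in> Pol p V"
| const: "c \<in> Ap_carrier p \<Longrightarrow> (\<lambda>x. c) \<in> Pol p V"
| zero: "(\<lambda>x. Ap_zero) \<in> Pol p V"
| add: "f \<in> Pol p V \<Longrightarrow> g \<in> Pol p V \<Longrightarrow> (\<lambda>x. Ap_add p (f x) (g x)) \<in> Pol p V"
| neg: "f \<in> Pol p V \<Longrightarrow> (\<lambda>x. Ap_neg p (f x)) \<in> Pol p V"
| fop: "\<forall>f\<in>set fs. f \<in> Pol p V \<Longrightarrow> (\<lambda>x. Ap_f p (map (\<lambda>f. f x) fs)) \<in> Pol p V"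

definition is_cong :: "int \<Rightarrow> int rel \<Rightarrow> bool" where
  "is_cong p \<theta> \<longleftrightarrow> equiv (Ap_carrier p) \<theta>
     \<and> (\<forall>(a, b) \<in> \<theta>. \<forall>(c, d) \<in> \<theta>. (Ap_add p a c, Ap_add p b d) \<in> \<theta>)
     \<and> (\<forall>(a, b) \<in> \<theta>. (Ap_neg p a, Ap_neg p b) \<in> \<theta>)
     \<and> (\<forall>xs ys. list_all2 (\<lambda>x y. (x, y) \<in> \<theta>) xs ys \<longrightarrow> (Ap_f p xs, Ap_f p ys) \<in> \<theta>)"

definition cong_one :: "int \<Rightarrow> int rel" where
  "cong_one p = Ap_carrier p \<times> Ap_carrier p"

definition cong_zero :: "int \<Rightarrow> int rel" where
  "cong_zero p = Id_on (Ap_carrier p)"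

text \<open>Variables of a polynomial f(x_1,...,x_n) with tuples x_i of length m are
  indexed by pairs (i, j), i < n, j < m (block i, position j; blocks are 0-based).
  sel a b S picks the tuple b_i for blocks i in S and a_i otherwise.\<close>
definition sel :: "(nat \<Rightarrow> nat \<Rightarrow> int) \<Rightarrow> (nat \<Rightarrow> nat \<Rightarrow> int) \<Rightarrow> nat set
                    \<Rightarrow> (nat \<times> nat \<Rightarrow> int)" where
  "sel a b S = (\<lambda>(i, j). if i \<in> S then b i j else a i j)"

definition term_cond :: "int \<Rightarrow> int rel list \<Rightarrow> int rel \<Rightarrow> bool" where
  "term_cond p \<alpha>s \<delta> \<longleftrightarrow>
    (\<forall>m f a b. f \<in> Pol p ({..<length \<alpha>s} \<times> {..<m}) \<longrightarrow>
       (\<forall>i < length \<alpha>s. \<forall>j < m. (a i j, b i j) \<in> \<alpha>s ! i) \<longrightarrow>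
       (\<forall>S. S \<subseteq> {1..<length \<alpha>s} \<and> S \<noteq> {1..<length \<alpha>s} \<longrightarrow>
            (f (sel a b S), f (sel a b (insert 0 S))) \<in> \<delta>) \<longrightarrow>
       (f (sel a b {1..<length \<alpha>s}), f (sel a b {0..<length \<alpha>s})) \<in> \<delta>)"

definition commutator :: "int \<Rightarrow> int rel list \<Rightarrow> int rel" where
  "commutator p \<alpha>s = \<Inter> {\<delta>. is_cong p \<delta> \<and> term_cond p \<alpha>s \<delta>}"

definition subgrp_p :: "int \<Rightarrow> int set" where
  "subgrp_p p = {(p * k) mod p^2 | k. True}"

definition coset_cong :: "int \<Rightarrow> int rel" where
  "coset_cong p = {(x, y). x \<in> Ap_carrier p \<and> y \<in> Ap_carrier p
                       \<and> Ap_add p x (Ap_neg p y) \<in> subgrp_p p}"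

definition zero_absorbing :: "int \<Rightarrow> nat \<Rightarrow> ((nat \<Rightarrow> int) \<Rightarrow> int) \<Rightarrow> bool" where
  "zero_absorbing p k g \<longleftrightarrow>
    (\<forall>y. (\<forall>i<k. y i \<in> Ap_carrier p) \<and> (\<exists>i<k. y i = 0) \<longrightarrow> g y = 0)"

end

theory Submission
  imports Defs "HOL-Number_Theory.Cong"
begin

(*
  Modulo p every f_n vanishes, so every polynomial of A_p is affine modulo p; and
  f_n(x') = f_n(x) modulo p^2 as soon as x' = x modulo p, so every polynomial is also affine
  modulo p^2 along directions in pZ.  With theta_q = Ap_cong_mod p q, the congruence modulo q,
  this gives the term condition [1, theta_r] <= theta_(p r) for r dividing p, hence [1,1] <= theta_p and
  [1, theta_p] = 0.  Conversely, f_k(t,1,...,1) - f_k(0,1,...,1) = p t while f_k vanishes at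
  every other vertex of the cube {0,t} x {0,1}^(k-1); so each [1,...,1] relates 0 to p t,
  which gives theta_p <= [1,1] and shows that no higher commutator of 1 is trivial.
*)

lemma cong_mod_left_dvd [simp]:
  fixes a b m q :: int
  shows "q dvd m \<Longrightarrow> [a mod m = b] (mod q) \<longleftrightarrow> [a = b] (mod q)"
  by (simp add: cong_def mod_mod_cancel)

lemma cong_mod_right_dvd [simp]:
  fixes a b m q :: int
  shows "q dvd m \<Longrightarrow> [a = b mod m] (mod q) \<longleftrightarrow> [a = b] (mod q)"
  by (simp add: cong_def mod_mod_cancel)

lemma cong_diff_mod:
  fixes a b m q :: int
  shows "q dvd m \<Longrightarrow> [a mod m - b mod m = a - b] (mod q)"
  by (intro cong_diff) simp_all

lemma cong_prod_list:
  fixes q :: int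
  assumes "list_all2 (\<lambda>a b. [a = b] (mod q)) xs ys"
  shows "[prod_list xs = prod_list ys] (mod q)"
  using assms by (induction rule: list_all2_induct) (simp_all add: cong_mult)

lemma mod_in_Ap_carrier [simp]: "p \<noteq> 0 \<Longrightarrow> z mod p^2 \<in> Ap_carrier p"
  by (simp add: Ap_carrier_def)

lemma Ap_f_cong_0:
  assumes "r dvd p"
  shows "[Ap_f p xs = 0] (mod r)"
proof -
  have "r dvd p^2" using assms by (simp add: power2_eq_square)
  then show ?thesis
    unfolding Ap_f_def cong_mod_left_dvd[OF \<open>r dvd p^2\<close>]
    using assms by (simp add: cong_0_iff)
qed

lemma Ap_f_cong:
  assumes "list_all2 (\<lambda>a b. [a = b] (mod q)) xs ys" "n dvd p^2" "n dvd p * q"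
  shows "[Ap_f p xs = Ap_f p ys] (mod n)"
proof -
  have "[p * prod_list xs = p * prod_list ys] (mod p * q)"
    using cong_prod_list[OF assms(1)] by (rule cong_cmult_leftI)
  then show ?thesis
    using assms(2,3) by (simp add: Ap_f_def cong_dvd_modulus)
qed

definition Ap_cong_mod :: "int \<Rightarrow> int \<Rightarrow> int rel" where
  "Ap_cong_mod p q = {(x, y). x \<in> Ap_carrier p \<and> y \<in> Ap_carrier p \<and> [x = y] (mod q)}"

lemma is_cong_Ap_cong_mod:
  assumes "p \<noteq> 0" "q dvd p^2"
  shows "is_cong p (Ap_cong_mod p q)"
proof -
  have "equiv (Ap_carrier p) (Ap_cong_mod p q)"
    by (rule equivI)
      (auto simp: Ap_cong_mod_def refl_on_def sym_def trans_def intro: cong_sym cong_trans)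
  moreover have "(Ap_f p xs, Ap_f p ys) \<in> Ap_cong_mod p q"
    if "list_all2 (\<lambda>x y. (x, y) \<in> Ap_cong_mod p q) xs ys" for xs ys
  proof -
    have "list_all2 (\<lambda>x y. [x = y] (mod q)) xs ys"
      using that by (rule list_all2_mono) (simp add: Ap_cong_mod_def)
    then have "[Ap_f p xs = Ap_f p ys] (mod q)"
      using assms(2) by (rule Ap_f_cong) simp
    then show ?thesis
      using assms(1) by (simp add: Ap_cong_mod_def Ap_f_def)
  qed
  ultimately show ?thesis
    using assms by (auto simp: is_cong_def Ap_cong_mod_def Ap_add_def Ap_neg_def
      intro: cong_add cong_uminus)
qed

lemma cong_one_eq: "cong_one p = Ap_cong_mod p 1"
  by (auto simp: cong_one_def Ap_cong_mod_def)

lemma cong_zero_eq: "cong_zero p = Ap_cong_mod p (p^2)"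
proof -
  have "x = y" if "x \<in> Ap_carrier p" "y \<in> Ap_carrier p" "[x = y] (mod p^2)" for x y
    using that by (auto simp: Ap_carrier_def intro: cong_less_imp_eq_int)
  then show ?thesis by (auto simp: cong_zero_def Ap_cong_mod_def)
qed

lemma coset_cong_eq:
  assumes "p \<noteq> 0"
  shows "coset_cong p = Ap_cong_mod p p"
proof -
  have "(x - y) mod p^2 \<in> subgrp_p p \<longleftrightarrow> [x = y] (mod p)" for x y
  proof
    assume "(x - y) mod p^2 \<in> subgrp_p p"
    then obtain k where "(x - y) mod p^2 = (p * k) mod p^2" unfolding subgrp_p_def by auto
    then have "[x - y = p * k] (mod p)"
      by (metis cong_def cong_mod_left_dvd dvd_triv_left power2_eq_square)
    then have "[x - y = 0] (mod p)"
      using cong_mult_self_left cong_trans by blast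
    then show "[x = y] (mod p)"
      by (simp add: cong_diff_iff_cong_0)
  next
    assume "[x = y] (mod p)"
    then obtain k where "x - y = p * k" by (auto simp: cong_iff_dvd_diff)
    then show "(x - y) mod p^2 \<in> subgrp_p p" unfolding subgrp_p_def by auto
  qed
  moreover have "Ap_add p x (Ap_neg p y) = (x - y) mod p^2" for x y
    unfolding Ap_add_def Ap_neg_def by (simp add: mod_add_right_eq)
  ultimately show ?thesis by (auto simp: coset_cong_def Ap_cong_mod_def)
qed

lemma Pol_in_carrier:
  assumes "f \<in> Pol p V" "p \<noteq> 0" "\<forall>v\<in>V. x v \<in> Ap_carrier p"
  shows "f x \<in> Ap_carrier p"
  using assms
  by (induction rule: Pol.induct) (auto simp: Ap_add_def Ap_neg_def Ap_f_def Ap_zero_def Ap_carrier_def)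

lemma Pol_cong_mod:
  assumes "f \<in> Pol p V" "r dvd p" "\<forall>v\<in>V. [x' v = x v] (mod r)"
  shows "[f x' = f x] (mod r)"
  using assms(1)
proof (induction rule: Pol.induct)
  case (fop fs)
  show ?case using cong_trans[OF Ap_f_cong_0[OF assms(2)] cong_sym[OF Ap_f_cong_0[OF assms(2)]]] .
qed (use assms(2,3) dvd_mult2[OF assms(2), of p] in
      \<open>auto simp: Ap_add_def Ap_neg_def power2_eq_square intro: cong_add cong_uminus\<close>)

lemma Pol_affine_mod:
  assumes "f \<in> Pol p V" "r dvd p"
    and "\<forall>v\<in>V. x' v - x v = y' v - y v \<and> [x' v = x v] (mod r)"
  shows "[f x' - f x = f y' - f y] (mod p * r)"
  using assms(1)
proof (induction rule: Pol.induct)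
  case (proj v)
  then show ?case using assms(3) by simp
next
  case (add f g)
  have "p * r dvd p^2" using assms(2) by (simp add: power2_eq_square)
  then have add_diff: "[Ap_add p a b - Ap_add p c d = (a - c) + (b - d)] (mod p * r)" for a b c d
    unfolding Ap_add_def by (rule cong_trans[OF cong_diff_mod]) (simp_all add: algebra_simps)
  show ?case
    using cong_trans[OF add_diff cong_trans[OF cong_add[OF add.IH] cong_sym[OF add_diff]]] .
next
  case (neg f)
  have "p * r dvd p^2" using assms(2) by (simp add: power2_eq_square)
  then have neg_diff: "[Ap_neg p a - Ap_neg p b = - (a - b)] (mod p * r)" for a b
    unfolding Ap_neg_def by (rule cong_trans[OF cong_diff_mod]) simp_all
  show ?case
    using cong_trans[OF neg_diff cong_trans[OF cong_uminus[OF neg.IH] cong_sym[OF neg_diff]]] .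
next
  case (fop gs)
  have "p * r dvd p^2" using assms(2) by (simp add: power2_eq_square)
  have Ap_f_diff: "[Ap_f p (map (\<lambda>g. g z') gs) - Ap_f p (map (\<lambda>g. g z) gs) = 0] (mod p * r)"
    if "\<forall>v\<in>V. [z' v = z v] (mod r)" for z z'
    unfolding cong_diff_iff_cong_0
  proof (rule Ap_f_cong[OF _ \<open>p * r dvd p^2\<close>])
    show "list_all2 (\<lambda>a b. [a = b] (mod r)) (map (\<lambda>g. g z') gs) (map (\<lambda>g. g z) gs)"
      using fop Pol_cong_mod[OF _ assms(2) that]
      by (auto simp: list_all2_map1 list_all2_map2 list_all2_same)
  qed simp
  have "\<forall>v\<in>V. [x' v = x v] (mod r)" "\<forall>v\<in>V. [y' v = y v] (mod r)"
    using assms(3) by (auto simp: cong_iff_dvd_diff)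
  then show ?case
    using cong_trans[OF Ap_f_diff cong_sym[OF Ap_f_diff]] by blast
qed simp_all

lemma Ap_f_in_Pol:
  assumes "set vs \<subseteq> V"
  shows "(\<lambda>x. Ap_f p (map x vs)) \<in> Pol p V"
proof -
  have "(\<lambda>x. Ap_f p (map (\<lambda>g. g x) (map (\<lambda>v x. x v) vs))) \<in> Pol p V"
    using assms by (intro Pol.fop) (auto intro: Pol.proj)
  then show ?thesis by (simp add: comp_def)
qed

lemma Ap_f_zero_absorbing: "zero_absorbing p n (\<lambda>x. Ap_f p (map x [0..<n]))"
  unfolding zero_absorbing_def
proof (intro allI impI)
  fix y :: "nat \<Rightarrow> int"
  assume "(\<forall>i<n. y i \<in> Ap_carrier p) \<and> (\<exists>i<n. y i = 0)"
  then have "prod_list (map y [0..<n]) = 0"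
    by (force simp: prod_list_zero_iff)
  then show "Ap_f p (map y [0..<n]) = 0" by (simp add: Ap_f_def)
qed

lemma Ap_f_ones: "1 < p \<Longrightarrow> Ap_f p (map (\<lambda>_. 1) [0..<n]) = p"
  by (simp add: Ap_f_def map_replicate_const power2_eq_square)

lemma term_cond_pairI:
  assumes "\<And>m f a b. f \<in> Pol p ({..<2} \<times> {..<m}) \<Longrightarrow>
      (\<And>j. j < m \<Longrightarrow> (a 0 j, b 0 j) \<in> \<alpha> \<and> (a 1 j, b 1 j) \<in> \<beta>) \<Longrightarrow>
      (f (sel a b {}), f (sel a b {0})) \<in> \<delta> \<Longrightarrow> (f (sel a b {1}), f (sel a b {0, 1})) \<in> \<delta>"
  shows "term_cond p [\<alpha>, \<beta>] \<delta>"
  unfolding term_cond_def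
proof (intro allI impI)
  fix m f a b
  assume f: "f \<in> Pol p ({..<length [\<alpha>, \<beta>]} \<times> {..<m})"
    and ab: "\<forall>i<length [\<alpha>, \<beta>]. \<forall>j<m. (a i j, b i j) \<in> [\<alpha>, \<beta>] ! i"
    and hyp: "\<forall>S. S \<subseteq> {1..<length [\<alpha>, \<beta>]} \<and> S \<noteq> {1..<length [\<alpha>, \<beta>]} \<longrightarrow>
           (f (sel a b S), f (sel a b (insert 0 S))) \<in> \<delta>"
  have "(f (sel a b {1}), f (sel a b {0, 1})) \<in> \<delta>"
  proof (rule assms)
    show "f \<in> Pol p ({..<2} \<times> {..<m})" using f by (simp add: numeral_2_eq_2)
    show "(a 0 j, b 0 j) \<in> \<alpha> \<and> (a 1 j, b 1 j) \<in> \<beta>" if "j < m" for j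
      using ab that by auto
    show "(f (sel a b {}), f (sel a b {0})) \<in> \<delta>" using hyp by auto
  qed
  moreover have "{1..<length [\<alpha>, \<beta>]} = {1}" "{0..<length [\<alpha>, \<beta>]} = {0, 1}" by auto
  ultimately show "(f (sel a b {1..<length [\<alpha>, \<beta>]}), f (sel a b {0..<length [\<alpha>, \<beta>]})) \<in> \<delta>"
    by simp
qed

lemma term_cond_one_Ap_cong_mod:
  assumes "p \<noteq> 0" "r dvd p"
  shows "term_cond p [cong_one p, Ap_cong_mod p r] (Ap_cong_mod p (p * r))"
proof (rule term_cond_pairI)
  fix m f a b
  assume f: "f \<in> Pol p ({..<2} \<times> {..<m})"
    and ab: "\<And>j. j < m \<Longrightarrow> (a 0 j, b 0 j) \<in> cong_one p \<and> (a 1 j, b 1 j) \<in> Ap_cong_mod p r"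
    and hyp: "(f (sel a b {}), f (sel a b {0})) \<in> Ap_cong_mod p (p * r)"
  have "\<forall>v\<in>{..<2} \<times> {..<m}. sel a b S v \<in> Ap_carrier p" for S
    using ab by (auto simp: sel_def cong_one_def Ap_cong_mod_def less_2_cases_iff)
  then have car: "f (sel a b S) \<in> Ap_carrier p" for S
    by (rule Pol_in_carrier[OF f assms(1)])
  have "\<forall>v\<in>{..<2} \<times> {..<m}. sel a b {1} v - sel a b {} v = sel a b {0, 1} v - sel a b {0} v
          \<and> [sel a b {1} v = sel a b {} v] (mod r)"
    using ab by (auto simp: sel_def Ap_cong_mod_def less_2_cases_iff cong_sym_eq)
  then have "[f (sel a b {1}) - f (sel a b {}) = f (sel a b {0, 1}) - f (sel a b {0})] (mod p * r)"
    by (rule Pol_affine_mod[OF f assms(2)])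
  moreover have "[f (sel a b {}) = f (sel a b {0})] (mod p * r)"
    using hyp by (simp add: Ap_cong_mod_def)
  ultimately have "[f (sel a b {1}) = f (sel a b {0, 1})] (mod p * r)"
    using cong_add by fastforce
  then show "(f (sel a b {1}), f (sel a b {0, 1})) \<in> Ap_cong_mod p (p * r)"
    using car by (simp add: Ap_cong_mod_def)
qed

lemma commutator_least: "is_cong p \<delta> \<Longrightarrow> term_cond p \<alpha>s \<delta> \<Longrightarrow> commutator p \<alpha>s \<subseteq> \<delta>"
  unfolding commutator_def by auto

lemma commutator_memI:
  "(\<And>\<delta>. is_cong p \<delta> \<Longrightarrow> term_cond p \<alpha>s \<delta> \<Longrightarrow> z \<in> \<delta>) \<Longrightarrow> z \<in> commutator p \<alpha>s"
  unfolding commutator_def by auto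

lemma is_cong_refl: "is_cong p \<delta> \<Longrightarrow> x \<in> Ap_carrier p \<Longrightarrow> (x, x) \<in> \<delta>"
  unfolding is_cong_def equiv_def refl_on_def by auto

lemma term_cond_ones_mem:
  assumes "1 < p" "is_cong p \<delta>" "term_cond p (replicate k (cong_one p)) \<delta>" "k \<ge> 1"
    and "t \<in> Ap_carrier p"
  shows "(0, (p * t) mod p^2) \<in> \<delta>"
proof -
  define f where "f = (\<lambda>x. Ap_f p (map x (map (\<lambda>i. (i, 0::nat)) [0..<k])))"
  define a where "a = (\<lambda>(i::nat) (j::nat). 0::int)"
  define b where "b = (\<lambda>(i::nat) (j::nat). if i = 0 then t else 1::int)"
  have f: "f \<in> Pol p ({..<k} \<times> {..<1})"
    unfolding f_def by (rule Ap_f_in_Pol) auto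
  have f_sel: "f (sel a b S) = (p * (\<Prod>i\<leftarrow>[0..<k]. if i \<in> S then b i 0 else 0)) mod p^2" for S
    by (simp add: f_def Ap_f_def sel_def a_def comp_def)
  have f_zero: "f (sel a b S) = 0" if "i < k" "i \<notin> S" for i S
  proof -
    have "(\<Prod>j\<leftarrow>[0..<k]. if j \<in> S then b j 0 else 0) = 0"
      using that by (simp add: prod_list_zero_iff rev_image_eqI[of i])
    then show ?thesis by (simp add: f_sel)
  qed
  have "1 < p^2" using assms(1) by simp
  then have car: "0 \<in> Ap_carrier p" "1 \<in> Ap_carrier p" by (auto simp: Ap_carrier_def)
  have tc: "\<lbrakk>\<forall>i<k. \<forall>j<1. (a i j, b i j) \<in> cong_one p;
      \<forall>S. S \<subseteq> {1..<k} \<and> S \<noteq> {1..<k} \<longrightarrow> (f (sel a b S), f (sel a b (insert 0 S))) \<in> \<delta>\<rbrakk>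
      \<Longrightarrow> (f (sel a b {1..<k}), f (sel a b {0..<k})) \<in> \<delta>"
    using assms(3) f by (simp add: term_cond_def)
  have "(f (sel a b {1..<k}), f (sel a b {0..<k})) \<in> \<delta>"
  proof (rule tc)
    show "\<forall>i<k. \<forall>j<1. (a i j, b i j) \<in> cong_one p"
      using car assms(5) by (simp add: a_def b_def cong_one_def)
    show "\<forall>S. S \<subseteq> {1..<k} \<and> S \<noteq> {1..<k} \<longrightarrow> (f (sel a b S), f (sel a b (insert 0 S))) \<in> \<delta>"
    proof (intro allI impI)
      fix S assume "S \<subseteq> {1..<k} \<and> S \<noteq> {1..<k}"
      then obtain i where "i \<in> {1..<k}" "i \<notin> S" by blast
      then have "f (sel a b S) = 0" "f (sel a b (insert 0 S)) = 0" using f_zero[of i] by auto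
      then show "(f (sel a b S), f (sel a b (insert 0 S))) \<in> \<delta>"
        using is_cong_refl[OF assms(2) car(1)] by simp
    qed
  qed
  moreover have "f (sel a b {1..<k}) = 0" using assms(4) f_zero[of 0] by simp
  moreover have "f (sel a b {0..<k}) = (p * t) mod p^2"
  proof -
    have "(\<Prod>i\<leftarrow>[1..<k]. if i \<in> {0..<k} then b i 0 else 0) = (\<Prod>i\<leftarrow>[1..<k]. 1)"
      by (rule arg_cong[where f = prod_list], rule map_cong) (auto simp: b_def)
    moreover have "[0..<k] = 0 # [1..<k]" using assms(4) by (simp add: upt_conv_Cons)
    ultimately have "(\<Prod>i\<leftarrow>[0..<k]. if i \<in> {0..<k} then b i 0 else 0) = t"
      using assms(4) by (simp add: map_replicate_const b_def)
    then show ?thesis by (simp add: f_sel)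
  qed
  ultimately show ?thesis by simp
qed

lemma commutator_one_one:
  assumes "1 < p"
  shows "commutator p [cong_one p, cong_one p] = coset_cong p"
proof
  have "p \<noteq> 0" using assms by simp
  have "term_cond p [cong_one p, cong_one p] (coset_cong p)"
    using term_cond_one_Ap_cong_mod[OF \<open>p \<noteq> 0\<close>, of 1]
    by (simp add: cong_one_eq coset_cong_eq[OF \<open>p \<noteq> 0\<close>])
  moreover have "is_cong p (coset_cong p)"
    using is_cong_Ap_cong_mod[OF \<open>p \<noteq> 0\<close>, of p]
    by (simp add: coset_cong_eq[OF \<open>p \<noteq> 0\<close>] power2_eq_square)
  ultimately show "commutator p [cong_one p, cong_one p] \<subseteq> coset_cong p"
    by (rule commutator_least[rotated])
next
  show "coset_cong p \<subseteq> commutator p [cong_one p, cong_one p]"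
  proof (safe intro!: commutator_memI)
    fix x y \<delta>
    assume "(x, y) \<in> coset_cong p" and \<delta>: "is_cong p \<delta>" "term_cond p [cong_one p, cong_one p] \<delta>"
    then have x: "x \<in> Ap_carrier p" and y: "y \<in> Ap_carrier p" and "[x = y] (mod p)"
      using assms by (simp_all add: coset_cong_eq Ap_cong_mod_def)
    then obtain k where k: "y = x + p * k" by (auto simp: cong_iff_lin)
    have "[cong_one p, cong_one p] = replicate 2 (cong_one p)" by (simp add: numeral_2_eq_2)
    then have "(0, (p * (k mod p^2)) mod p^2) \<in> \<delta>"
      using term_cond_ones_mem[OF assms \<delta>(1)] \<delta>(2) assms by simp
    with is_cong_refl[OF \<delta>(1) x] have "(Ap_add p 0 x, Ap_add p ((p * (k mod p^2)) mod p^2) x) \<in> \<delta>"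
      using \<delta>(1) unfolding is_cong_def by blast
    moreover have "Ap_add p 0 x = x" using x by (simp add: Ap_add_def Ap_carrier_def)
    moreover have "Ap_add p ((p * (k mod p^2)) mod p^2) x = (p * k + x) mod p^2"
      unfolding Ap_add_def by (metis mod_add_left_eq mod_mult_right_eq)
    moreover have "(p * k + x) mod p^2 = y" using y k by (simp add: Ap_carrier_def add.commute)
    ultimately show "(x, y) \<in> \<delta>" by simp
  qed
qed

lemma commutator_one_coset_cong:
  assumes "1 < p"
  shows "commutator p [cong_one p, coset_cong p] = cong_zero p"
proof
  have "p \<noteq> 0" using assms by simp
  have "term_cond p [cong_one p, coset_cong p] (cong_zero p)"
    using term_cond_one_Ap_cong_mod[OF \<open>p \<noteq> 0\<close> dvd_refl]
    by (simp add: cong_zero_eq coset_cong_eq[OF \<open>p \<noteq> 0\<close>] power2_eq_square)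
  moreover have "is_cong p (cong_zero p)"
    using is_cong_Ap_cong_mod[OF \<open>p \<noteq> 0\<close> dvd_refl] by (simp add: cong_zero_eq)
  ultimately show "commutator p [cong_one p, coset_cong p] \<subseteq> cong_zero p"
    by (rule commutator_least[rotated])
next
  show "cong_zero p \<subseteq> commutator p [cong_one p, coset_cong p]"
    by (auto simp: cong_zero_def intro!: commutator_memI is_cong_refl)
qed

lemma commutator_ones_neq_cong_zero:
  assumes "1 < p" "k \<ge> 1"
  shows "commutator p (replicate k (cong_one p)) \<noteq> cong_zero p"
proof -
  have "1 \<in> Ap_carrier p"
    using assms(1) by (simp add: Ap_carrier_def)
  then have "(0, p) \<in> commutator p (replicate k (cong_one p))"
    using term_cond_ones_mem[OF assms(1) _ _ assms(2)] assms(1)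
    by (intro commutator_memI) (force simp: power2_eq_square)
  moreover have "(0, p) \<notin> cong_zero p"
    using assms(1) by (auto simp: cong_zero_def)
  ultimately show ?thesis by blast
qed

theorem mainTheorem6:
  fixes p :: int
  assumes "prime p"
  shows "commutator p [cong_one p, cong_one p] = coset_cong p
    \<and> commutator p [cong_one p, commutator p [cong_one p, cong_one p]] = cong_zero p
    \<and> (\<forall>n\<ge>1. (\<lambda>x. Ap_f p (map x [0..<n])) \<in> Pol p {..<n}
              \<and> zero_absorbing p n (\<lambda>x. Ap_f p (map x [0..<n]))
              \<and> (\<exists>y. (\<forall>i<n. y i \<in> Ap_carrier p) \<and> Ap_f p (map y [0..<n]) \<noteq> 0))
    \<and> (\<forall>k\<ge>1. commutator p (replicate k (cong_one p)) \<noteq> cong_zero p)"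
proof -
  have p: "1 < p" using assms by (rule prime_gt_1_int)
  have f_nonzero: "\<exists>y. (\<forall>i<n. y i \<in> Ap_carrier p) \<and> Ap_f p (map y [0..<n]) \<noteq> 0" for n
  proof (intro exI conjI)
    show "\<forall>i<n. (\<lambda>_. 1) i \<in> Ap_carrier p" using p by (simp add: Ap_carrier_def)
    show "Ap_f p (map (\<lambda>_. 1) [0..<n]) \<noteq> 0" using p by (simp add: Ap_f_ones)
  qed
  have "(\<lambda>x. Ap_f p (map x [0..<n])) \<in> Pol p {..<n}" for n
    by (rule Ap_f_in_Pol) auto
  then show ?thesis
    using p commutator_one_one commutator_one_coset_cong commutator_ones_neq_cong_zero
      Ap_f_zero_absorbing f_nonzero by simp
qed

end
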